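(* Let $k$ be a field of characteristic $p>2$ ($p$ prime). For any $u,v,w\in k_1\langle X\rangle$, $$\kappa(u,vw)\equiv v^p\kappa(u,w)+w^p\kappa(u,v)\pmod{T^{(3)}}.$$ In particular, if $u,v\in k_0\langle X\rangle$ and $\alpha\in k$, then $\kappa(u,\alpha v)=\alpha^p\kappa(u,v)$.
   Context: $X=\{x_i\mid i\ge0\}$ is countably infinite; $k_1\langle X\rangle$ (resp. $k_0\langle X\rangle$) is the free unitary (resp. nonunitary) associative $k$-algebra on $X$. $[a,b]=ab-ba$, $[a,b,c]=[[a,b],c]$. $T^{(3)}$ is the $T$-ideal of $k_1\langle X\rangle$ (ideal invariant under all endomorphisms) generated by $[x_1,x_2,x_3]$. $\kappa(u,v)=[u,v]u^{p-1}v^{p-1}$. *)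

theory Defs
  imports Main "HOL-Computational_Algebra.Primes"
begin

text \<open>Free unitary associative k-algebra on X = {x_i | i >= 0}: an element is a
finitely supported function from words (lists of variable indices) to k.
The carrier is fa_carrier; k_0 is the subset with zero constant term.\<close>

type_synonym 'k fa = "nat list \<Rightarrow> 'k"

definition fa_carrier :: "('k::field) fa set" where
  "fa_carrier = {f. finite {w. f w \<noteq> 0}}"

definition fa_carrier0 :: "('k::field) fa set" where
  "fa_carrier0 = {f \<in> fa_carrier. f [] = 0}"

definition fa_zero :: "('k::field) fa" where
  "fa_zero = (\<lambda>w. 0)"

definition fa_one :: "('k::field) fa" where
  "fa_one = (\<lambda>w. if w = [] then 1 else 0)"

definition fa_var :: "nat \<Rightarrow> ('k::field) fa" where
  "fa_var i = (\<lambda>w. if w = [i] then 1 else 0)"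

definition fa_add :: "('k::field) fa \<Rightarrow> 'k fa \<Rightarrow> 'k fa" where
  "fa_add f g = (\<lambda>w. f w + g w)"

definition fa_sub :: "('k::field) fa \<Rightarrow> 'k fa \<Rightarrow> 'k fa" where
  "fa_sub f g = (\<lambda>w. f w - g w)"

definition fa_smult :: "'k::field \<Rightarrow> 'k fa \<Rightarrow> 'k fa" where
  "fa_smult c f = (\<lambda>w. c * f w)"

definition fa_mult :: "('k::field) fa \<Rightarrow> 'k fa \<Rightarrow> 'k fa" where
  "fa_mult f g = (\<lambda>w. \<Sum>i\<le>length w. f (take i w) * g (drop i w))"

definition fa_pow :: "('k::field) fa \<Rightarrow> nat \<Rightarrow> 'k fa" where
  "fa_pow f n = ((fa_mult f) ^^ n) fa_one"

definition fa_comm :: "('k::field) fa \<Rightarrow> 'k fa \<Rightarrow> 'k fa" where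
  "fa_comm a b = fa_sub (fa_mult a b) (fa_mult b a)"

definition fa_comm3 :: "('k::field) fa \<Rightarrow> 'k fa \<Rightarrow> 'k fa \<Rightarrow> 'k fa" where
  "fa_comm3 a b c = fa_comm (fa_comm a b) c"

definition fa_kappa :: "nat \<Rightarrow> ('k::field) fa \<Rightarrow> 'k fa \<Rightarrow> 'k fa" where
  "fa_kappa p u v = fa_mult (fa_mult (fa_comm u v) (fa_pow u (p - 1))) (fa_pow v (p - 1))"

definition fa_ideal :: "('k::field) fa set \<Rightarrow> bool" where
  "fa_ideal I \<longleftrightarrow> I \<subseteq> fa_carrier \<and> fa_zero \<in> I
     \<and> (\<forall>a\<in>I. \<forall>b\<in>I. fa_add a b \<in> I)
     \<and> (\<forall>a\<in>I. \<forall>c. fa_smult c a \<in> I)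
     \<and> (\<forall>a\<in>I. \<forall>r\<in>fa_carrier. fa_mult r a \<in> I \<and> fa_mult a r \<in> I)"

definition fa_endo :: "(('k::field) fa \<Rightarrow> 'k fa) \<Rightarrow> bool" where
  "fa_endo \<phi> \<longleftrightarrow> (\<forall>f\<in>fa_carrier. \<phi> f \<in> fa_carrier)
     \<and> (\<forall>f\<in>fa_carrier. \<forall>g\<in>fa_carrier. \<phi> (fa_add f g) = fa_add (\<phi> f) (\<phi> g))
     \<and> (\<forall>f\<in>fa_carrier. \<forall>c. \<phi> (fa_smult c f) = fa_smult c (\<phi> f))
     \<and> (\<forall>f\<in>fa_carrier. \<forall>g\<in>fa_carrier. \<phi> (fa_mult f g) = fa_mult (\<phi> f) (\<phi> g))
     \<and> \<phi> fa_one = fa_one"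

definition fa_T_ideal :: "('k::field) fa set \<Rightarrow> bool" where
  "fa_T_ideal I \<longleftrightarrow> fa_ideal I \<and> (\<forall>\<phi>. fa_endo \<phi> \<longrightarrow> \<phi> ` I \<subseteq> I)"

definition T3 :: "('k::field) fa set" where
  "T3 = \<Inter> {I. fa_T_ideal I \<and> fa_comm3 (fa_var 1) (fa_var 2) (fa_var 3) \<in> I}"

end

theory Submission
  imports Defs
begin

text \<open>Modulo \<open>T\<^sup>(\<^sup>3\<^sup>)\<close> every commutator \<open>[a, b]\<close> is central, and \<open>[x, y] [x, z] \<equiv> 0\<close> since
  expanding \<open>[[x, y z], x]\<close> gives \<open>-2 [x, y] [x, z]\<close> and \<open>2\<close> is invertible. Consequently
  \<open>[u, v]\<close> and \<open>[u, w]\<close> annihilate all commutators of monomials in \<open>u, v, w\<close>, so the monomial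
  factors following them may be reordered at will. Writing \<open>[u, v w] = v [u, w] + [u, v] w\<close>,
  the two summands of \<open>\<kappa>(u, v w)\<close> are thereby rearranged into \<open>v\<^sup>p \<kappa>(u, w)\<close> and
  \<open>w\<^sup>p \<kappa>(u, v)\<close>. This is an argument about an arbitrary ring modulo an ideal containing all
  double commutators; it is transported to \<open>k\<^sub>1\<langle>X\<rangle>\<close>, realised as a ring type, because the
  preimage of a \<open>T\<close>-ideal under every substitution homomorphism is such an ideal. The second
  claim only uses that scalars are central.\<close>

section \<open>Commutators in rings\<close>

definition commutator :: "'a::ring_1 \<Rightarrow> 'a \<Rightarrow> 'a" where
  "commutator a b = a * b - b * a"

lemma commutator_add_left: "commutator (a + b) c = commutator a c + commutator b c"
  by (simp add: commutator_def algebra_simps)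

lemma commutator_mult_left: "commutator (a * b) c = a * commutator b c + commutator a c * b"
  by (simp add: commutator_def algebra_simps)

lemma commutator_mult_right: "commutator a (b * c) = b * commutator a c + commutator a b * c"
  by (simp add: commutator_def algebra_simps)

lemma commutator_swap: "commutator b a = - commutator a b"
  by (simp add: commutator_def)

lemma commutator_self: "commutator a a = 0"
  by (simp add: commutator_def)

definition kappa :: "nat \<Rightarrow> 'a::ring_1 \<Rightarrow> 'a \<Rightarrow> 'a" where
  "kappa q a b = commutator a b * a ^ q * b ^ q"

lemma power_mult_central:
  fixes c :: "'a::monoid_mult"
  assumes "\<And>x. c * x = x * c"
  shows "(c * v) ^ n = c ^ n * v ^ n"
proof (induction n)
  case (Suc n)
  have "(c * v) ^ Suc n = c * (v * c ^ n) * v ^ n"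
    by (simp add: Suc mult.assoc)
  also have "\<dots> = c * (c ^ n * v) * v ^ n"
    using power_commuting_commutes[of c v n] assms by simp
  also have "\<dots> = c ^ Suc n * v ^ Suc n"
    by (simp add: mult.assoc)
  finally show ?case .
qed simp

lemma kappa_mult_central_right:
  assumes central: "\<And>x. c * x = x * c"
  shows "kappa q u (c * v) = c ^ Suc q * kappa q u v"
proof -
  have "commutator u (c * v) = c * commutator u v"
    by (simp add: commutator_def right_diff_distrib mult.assoc[symmetric] central[of u])
  then have "kappa q u (c * v) = c * (commutator u v * u ^ q * c ^ q) * v ^ q"
    by (simp add: kappa_def power_mult_central[OF central] mult.assoc)
  also have "\<dots> = c * (c ^ q * (commutator u v * u ^ q)) * v ^ q"
    by (simp only: power_commuting_commutes[OF central, symmetric])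
  also have "\<dots> = c ^ Suc q * kappa q u v"
    by (simp add: kappa_def mult.assoc)
  finally show ?thesis .
qed

inductive_set monoid_closure :: "'a::monoid_mult set \<Rightarrow> 'a set" for A where
  one: "1 \<in> monoid_closure A"
| mult: "a \<in> A \<Longrightarrow> x \<in> monoid_closure A \<Longrightarrow> a * x \<in> monoid_closure A"

lemma monoid_closure_mult:
  "x \<in> monoid_closure A \<Longrightarrow> y \<in> monoid_closure A \<Longrightarrow> x * y \<in> monoid_closure A"
  by (induction x rule: monoid_closure.induct) (auto simp: mult.assoc intro: monoid_closure.intros)

lemma monoid_closure_base: "a \<in> A \<Longrightarrow> a \<in> monoid_closure A"
  using monoid_closure.mult[OF _ monoid_closure.one] by fastforce

lemma monoid_closure_power: "x \<in> monoid_closure A \<Longrightarrow> x ^ n \<in> monoid_closure A"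
  by (induction n) (auto intro: monoid_closure_mult monoid_closure.one)

text \<open>The hypothesis \<open>half_mem\<close> is what remains of the invertibility of 2 in the ground field.\<close>
locale commutator3_ideal =
  fixes J :: "'a::ring_1 set"
  assumes zero_mem: "0 \<in> J"
    and add_mem: "x \<in> J \<Longrightarrow> y \<in> J \<Longrightarrow> x + y \<in> J"
    and mult_left_mem: "x \<in> J \<Longrightarrow> r * x \<in> J"
    and mult_right_mem: "x \<in> J \<Longrightarrow> x * r \<in> J"
    and commutator3_mem: "commutator (commutator a b) c \<in> J"
    and half_mem: "x + x \<in> J \<Longrightarrow> x \<in> J"
begin

lemma uminus_mem: "x \<in> J \<Longrightarrow> - x \<in> J"
  using mult_left_mem[of x "- 1"] by simp

lemma diff_mem: "x \<in> J \<Longrightarrow> y \<in> J \<Longrightarrow> x - y \<in> J"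
  using add_mem[of x "- y"] uminus_mem by simp

definition cong_mod :: "'a \<Rightarrow> 'a \<Rightarrow> bool" (infix "\<approx>" 50) where
  "a \<approx> b \<longleftrightarrow> a - b \<in> J"

lemma cong_refl: "a = b \<Longrightarrow> a \<approx> b"
  by (simp add: cong_mod_def zero_mem)

lemma cong_sym: "a \<approx> b \<Longrightarrow> b \<approx> a"
  unfolding cong_mod_def using uminus_mem by fastforce

lemma cong_trans [trans]: "a \<approx> b \<Longrightarrow> b \<approx> c \<Longrightarrow> a \<approx> c"
  unfolding cong_mod_def using add_mem by fastforce

lemma cong_add: "a \<approx> b \<Longrightarrow> c \<approx> d \<Longrightarrow> a + c \<approx> b + d"
  unfolding cong_mod_def using add_mem[of "a - b" "c - d"] by (simp add: algebra_simps)

lemma cong_mult_right: "a \<approx> b \<Longrightarrow> a * c \<approx> b * c"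
  unfolding cong_mod_def using mult_right_mem[of "a - b" c] by (simp add: algebra_simps)

lemma mem_if_cong: "a \<approx> b \<Longrightarrow> b \<in> J \<Longrightarrow> a \<in> J"
  unfolding cong_mod_def using add_mem by fastforce

lemma commutator_central: "commutator a b * c \<approx> c * commutator a b"
  using commutator3_mem[of a b c] by (simp add: cong_mod_def commutator_def)

text \<open>Modulo \<open>J\<close>, expanding \<open>[[x, y z], x]\<close> leaves \<open>[y, x] [x, z] + [x, y] [z, x] = -2 [x, y] [x, z]\<close>.\<close>
lemma commutator_mult_commutator_mem: "commutator x y * commutator x z \<in> J"
proof -
  have expand: "commutator (commutator x (y * z)) x
      = commutator y x * commutator x z + y * commutator (commutator x z) x
        + commutator x y * commutator z x + commutator (commutator x y) x * z"
    by (simp only: commutator_mult_right commutator_add_left commutator_mult_left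
        add.assoc add.left_commute)
  have "commutator y x * commutator x z + commutator x y * commutator z x
      = commutator (commutator x (y * z)) x - y * commutator (commutator x z) x
        - commutator (commutator x y) x * z"
    unfolding expand by (simp add: algebra_simps)
  also have "\<dots> \<in> J"
    by (intro diff_mem commutator3_mem mult_left_mem mult_right_mem)
  finally have "- (commutator x y * commutator x z + commutator x y * commutator x z) \<in> J"
    by (simp add: commutator_swap[of y x] commutator_swap[of z x])
  from uminus_mem[OF this] have "commutator x y * commutator x z + commutator x y * commutator x z \<in> J"
    by simp
  then show ?thesis
    by (rule half_mem)
qed

lemma commutator_mult_commutator_shared_mem:
  assumes "a = x \<or> b = x \<or> a = y \<or> b = y \<or> a = b"
  shows "commutator x y * commutator a b \<in> J"
  using assms
proof (elim disjE)
  assume "b = x"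
  then show ?thesis
    using uminus_mem[OF commutator_mult_commutator_mem[of x y a]] commutator_swap[of a x] by simp
next
  assume "a = y"
  then show ?thesis
    using uminus_mem[OF commutator_mult_commutator_mem[of y x b]] commutator_swap[of x y] by simp
next
  assume "b = y"
  then show ?thesis
    using commutator_mult_commutator_mem[of y x a] commutator_swap[of x y] commutator_swap[of a y]
    by simp
qed (simp_all add: commutator_mult_commutator_mem commutator_self zero_mem)

lemma commutator_annihilated_mult:
  assumes "commutator x y * s \<in> J"
  shows "commutator x y * (r * s * t) \<in> J"
proof (rule mem_if_cong)
  show "commutator x y * (r * s * t) \<approx> r * (commutator x y * s * t)"
    using cong_mult_right[OF commutator_central[of x y r], of "s * t"] by (simp add: mult.assoc)
  show "r * (commutator x y * s * t) \<in> J"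
    by (intro mult_left_mem mult_right_mem assms)
qed

text \<open>The elements annihilated by \<open>[x, y]\<close> modulo \<open>J\<close> form an ideal, and \<open>[-, -]\<close> is a derivation
  in each argument.\<close>
lemma commutator_annihilated_monoid_closure:
  assumes base: "\<And>a b. a \<in> A \<Longrightarrow> b \<in> A \<Longrightarrow> commutator x y * commutator a b \<in> J"
    and X: "X \<in> monoid_closure A" and Y: "Y \<in> monoid_closure A"
  shows "commutator x y * commutator X Y \<in> J"
proof -
  have right: "commutator x y * commutator a Y \<in> J" if "a \<in> A" for a
    using Y
  proof (induction Y rule: monoid_closure.induct)
    case (mult b Y)
    then show ?case
      using commutator_annihilated_mult[OF mult.IH, of b 1]
        commutator_annihilated_mult[OF base[OF that mult.hyps(1)], of 1 Y]
      by (simp add: commutator_mult_right distrib_left add_mem)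
  qed (simp add: commutator_def zero_mem)
  from X show ?thesis
  proof (induction X rule: monoid_closure.induct)
    case (mult a X)
    then show ?case
      using commutator_annihilated_mult[OF mult.IH, of a 1]
        commutator_annihilated_mult[OF right[OF mult.hyps(1)], of 1 X]
      by (simp add: commutator_mult_left distrib_left add_mem)
  qed (simp add: commutator_def zero_mem)
qed

lemma commutator_mult_reorder:
  assumes base: "\<And>a b. a \<in> A \<Longrightarrow> b \<in> A \<Longrightarrow> commutator x y * commutator a b \<in> J"
    and "X \<in> monoid_closure A" "Y \<in> monoid_closure A"
  shows "commutator x y * Z * (X * Y) \<approx> commutator x y * Z * (Y * X)"
  using commutator_annihilated_mult[OF commutator_annihilated_monoid_closure[OF assms], of Z 1]
  by (simp add: cong_mod_def commutator_def right_diff_distrib mult.assoc)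

lemma commutator_mult_power_mult:
  assumes base: "\<And>a b. a \<in> A \<Longrightarrow> b \<in> A \<Longrightarrow> commutator x y * commutator a b \<in> J"
    and v: "v \<in> monoid_closure A" and w: "w \<in> monoid_closure A"
  shows "commutator x y * Z * (v * w) ^ n \<approx> commutator x y * Z * (v ^ n * w ^ n)"
proof (induction n)
  case (Suc n)
  let ?D = "commutator x y"
  have "?D * Z * (v * w) ^ Suc n = ?D * Z * (v * w) ^ n * (v * w)"
    by (simp only: power_Suc2 mult.assoc)
  also have "\<dots> \<approx> ?D * Z * (v ^ n * w ^ n) * (v * w)"
    by (rule cong_mult_right[OF Suc])
  also have "\<dots> = ?D * (Z * v ^ n) * (w ^ n * v) * w"
    by (simp only: mult.assoc)
  also have "\<dots> \<approx> ?D * (Z * v ^ n) * (v * w ^ n) * w"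
    using v w by (intro cong_mult_right commutator_mult_reorder[OF base] monoid_closure_power)
  also have "\<dots> = ?D * Z * (v ^ Suc n * w ^ Suc n)"
    by (simp only: mult.assoc power_Suc2)
  finally show ?case .
qed (simp add: cong_refl)

lemma commutator_mult_commutator_generators_mem:
  "a \<in> {x, y, z} \<Longrightarrow> b \<in> {x, y, z} \<Longrightarrow> commutator x y * commutator a b \<in> J"
  by (intro commutator_mult_commutator_shared_mem) auto

lemma mult_commutator_kappa_cong:
  "v * commutator u w * u ^ q * (v * w) ^ q \<approx> v ^ Suc q * kappa q u w"
proof -
  let ?D = "commutator u w" and ?M = "monoid_closure {u, w, v}"
  note base = commutator_mult_commutator_generators_mem[of _ u w v]
  have u: "u ^ n \<in> ?M" and v: "v ^ n \<in> ?M" and w: "w \<in> ?M" for n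
    by (simp_all add: monoid_closure_base monoid_closure_power)
  have "v * ?D * u ^ q * (v * w) ^ q \<approx> ?D * v * u ^ q * (v * w) ^ q"
    by (intro cong_mult_right) (rule cong_sym[OF commutator_central])
  also have "\<dots> \<approx> ?D * u ^ q * v * (v * w) ^ q"
    using cong_mult_right[OF commutator_mult_reorder[OF base v[of 1] u[of q], of 1], of "(v * w) ^ q"]
    by (simp add: mult.assoc)
  also have "\<dots> \<approx> ?D * (u ^ q * v) * (v ^ q * w ^ q)"
    using commutator_mult_power_mult[OF base v[of 1] w, of "u ^ q * v" q] by (simp add: mult.assoc)
  also have "\<dots> \<approx> ?D * v ^ Suc q * u ^ q * w ^ q"
    using cong_mult_right[OF commutator_mult_reorder[OF base u[of q] v[of "Suc q"], of 1], of "w ^ q"]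
    by (simp add: mult.assoc)
  also have "\<dots> \<approx> v ^ Suc q * ?D * u ^ q * w ^ q"
    by (intro cong_mult_right commutator_central)
  finally show ?thesis
    by (simp add: kappa_def mult.assoc)
qed

lemma commutator_mult_kappa_cong:
  "commutator u v * w * u ^ q * (v * w) ^ q \<approx> w ^ Suc q * kappa q u v"
proof -
  let ?D = "commutator u v" and ?M = "monoid_closure {u, v, w}"
  note base = commutator_mult_commutator_generators_mem[of _ u v w]
  have u: "u ^ n \<in> ?M" and v: "v ^ n \<in> ?M" and w: "w ^ n \<in> ?M" for n
    by (simp_all add: monoid_closure_base monoid_closure_power)
  have "?D * w * u ^ q * (v * w) ^ q \<approx> ?D * u ^ q * w * (v * w) ^ q"
    using cong_mult_right[OF commutator_mult_reorder[OF base w[of 1] u[of q], of 1], of "(v * w) ^ q"]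
    by (simp add: mult.assoc)
  also have "\<dots> \<approx> ?D * (u ^ q * w) * (v ^ q * w ^ q)"
    using commutator_mult_power_mult[OF base v[of 1] w[of 1], of "u ^ q * w" q]
    by (simp add: mult.assoc)
  also have "\<dots> \<approx> ?D * u ^ q * (v ^ q * w) * w ^ q"
    using cong_mult_right[OF commutator_mult_reorder[OF base w[of 1] v[of q], of "u ^ q"], of "w ^ q"]
    by (simp add: mult.assoc)
  also have "\<dots> \<approx> ?D * w ^ Suc q * u ^ q * v ^ q"
    using commutator_mult_reorder[OF base monoid_closure_mult[OF u v] w[of "Suc q"], of 1]
    by (simp add: mult.assoc)
  also have "\<dots> \<approx> w ^ Suc q * ?D * u ^ q * v ^ q"
    by (intro cong_mult_right commutator_central)
  finally show ?thesis
    by (simp add: kappa_def mult.assoc)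
qed

lemma kappa_mult_right_cong:
  "kappa q u (v * w) \<approx> v ^ Suc q * kappa q u w + w ^ Suc q * kappa q u v"
proof -
  have "kappa q u (v * w)
      = v * commutator u w * u ^ q * (v * w) ^ q + commutator u v * w * u ^ q * (v * w) ^ q"
    by (simp add: kappa_def commutator_mult_right distrib_right)
  then show ?thesis
    using cong_add[OF mult_commutator_kappa_cong commutator_mult_kappa_cong] by simp
qed

end

section \<open>The free algebra as a ring\<close>

abbreviation fa_support :: "('k::field) fa \<Rightarrow> nat list set" where
  "fa_support f \<equiv> {w. f w \<noteq> 0}"

abbreviation splits :: "nat list \<Rightarrow> (nat list \<times> nat list) set" where
  "splits w \<equiv> {p. fst p @ snd p = w}"

lemma splits_eq: "splits w = (\<lambda>i. (take i w, drop i w)) ` {..length w}"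
proof (rule set_eqI, rule iffI)
  fix p assume "p \<in> splits w"
  then show "p \<in> (\<lambda>i. (take i w, drop i w)) ` {..length w}"
    by (intro image_eqI[of _ _ "length (fst p)"]) (auto simp: prod_eq_iff)
qed auto

lemma finite_splits: "finite (splits w)"
  unfolding splits_eq by simp

lemma fa_mult_splits: "fa_mult f g w = (\<Sum>p\<in>splits w. f (fst p) * g (snd p))"
  unfolding fa_mult_def
  by (rule sum.reindex_bij_witness[where i="\<lambda>p. length (fst p)" and j="\<lambda>i. (take i w, drop i w)"])
    auto

lemma fa_mult_assoc: "fa_mult (fa_mult f g) h = fa_mult f (fa_mult g h)"
proof (rule ext)
  fix w
  have "fa_mult (fa_mult f g) h w
      = (\<Sum>p\<in>splits w. \<Sum>q\<in>splits (fst p). f (fst q) * g (snd q) * h (snd p))"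
    by (simp add: fa_mult_splits sum_distrib_right)
  also have "\<dots> = (\<Sum>(p, q)\<in>Sigma (splits w) (\<lambda>p. splits (fst p)). f (fst q) * g (snd q) * h (snd p))"
    by (rule sum.Sigma) (auto simp: finite_splits)
  also have "\<dots> = (\<Sum>(p, q)\<in>Sigma (splits w) (\<lambda>p. splits (snd p)). f (fst p) * (g (fst q) * h (snd q)))"
    by (rule sum.reindex_bij_witness[where j="\<lambda>(p, q). ((fst q, snd q @ snd p), (snd q, snd p))"
          and i="\<lambda>(p, q). ((fst p @ fst q, snd q), (fst p, fst q))"]) (auto simp: mult.assoc)
  also have "\<dots> = (\<Sum>p\<in>splits w. \<Sum>q\<in>splits (snd p). f (fst p) * (g (fst q) * h (snd q)))"
    by (rule sum.Sigma[symmetric]) (auto simp: finite_splits)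
  also have "\<dots> = fa_mult f (fa_mult g h) w"
    by (simp add: fa_mult_splits sum_distrib_left)
  finally show "fa_mult (fa_mult f g) h w = fa_mult f (fa_mult g h) w" .
qed

lemma fa_mult_const_left: "fa_mult (\<lambda>w. if w = [] then c else 0) f = fa_smult c f"
proof (rule ext)
  fix w
  have "(\<Sum>i\<le>length w. (if take i w = [] then c else 0) * f (drop i w))
      = (\<Sum>i\<le>length w. if i = 0 then c * f w else 0)"
    by (rule sum.cong) auto
  then show "fa_mult (\<lambda>w. if w = [] then c else 0) f w = fa_smult c f w"
    by (simp add: fa_mult_def fa_smult_def)
qed

lemma fa_mult_const_right: "fa_mult f (\<lambda>w. if w = [] then c else 0) = fa_smult c f"
proof (rule ext)
  fix w
  have "(\<Sum>i\<le>length w. f (take i w) * (if drop i w = [] then c else 0))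
      = (\<Sum>i\<le>length w. if i = length w then c * f w else 0)"
    by (rule sum.cong) auto
  then show "fa_mult f (\<lambda>w. if w = [] then c else 0) w = fa_smult c f w"
    by (simp add: fa_mult_def fa_smult_def)
qed

lemma fa_mult_add_left: "fa_mult (fa_add f g) h = fa_add (fa_mult f h) (fa_mult g h)"
  by (simp add: fa_mult_def fa_add_def distrib_right sum.distrib)

lemma fa_mult_add_right: "fa_mult h (fa_add f g) = fa_add (fa_mult h f) (fa_mult h g)"
  by (simp add: fa_mult_def fa_add_def distrib_left sum.distrib)

lemma fa_support_mult:
  "fa_support (fa_mult f g) \<subseteq> (\<lambda>p. fst p @ snd p) ` (fa_support f \<times> fa_support g)"
proof
  fix w assume "w \<in> fa_support (fa_mult f g)"
  then have "(\<Sum>p\<in>splits w. f (fst p) * g (snd p)) \<noteq> 0"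
    by (simp add: fa_mult_splits)
  then obtain p where "p \<in> splits w" "f (fst p) * g (snd p) \<noteq> 0"
    using sum.not_neutral_contains_not_neutral by blast
  then show "w \<in> (\<lambda>p. fst p @ snd p) ` (fa_support f \<times> fa_support g)"
    by (intro image_eqI[of w _ p]) (auto simp: mem_Times_iff)
qed

lemma fa_carrier_mult: "f \<in> fa_carrier \<Longrightarrow> g \<in> fa_carrier \<Longrightarrow> fa_mult f g \<in> fa_carrier"
  unfolding fa_carrier_def using fa_support_mult[of f g] by (auto intro: finite_subset)

lemma fa_carrier_add: "f \<in> fa_carrier \<Longrightarrow> g \<in> fa_carrier \<Longrightarrow> fa_add f g \<in> fa_carrier"
  unfolding fa_carrier_def fa_add_def
  by (auto intro: finite_subset[of _ "fa_support f \<union> fa_support g"])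

lemma fa_carrier_sub: "f \<in> fa_carrier \<Longrightarrow> g \<in> fa_carrier \<Longrightarrow> fa_sub f g \<in> fa_carrier"
  unfolding fa_carrier_def fa_sub_def
  by (auto intro: finite_subset[of _ "fa_support f \<union> fa_support g"])

lemma fa_carrier_uminus: "f \<in> fa_carrier \<Longrightarrow> (\<lambda>w. - f w) \<in> fa_carrier"
  unfolding fa_carrier_def by simp

lemma fa_carrier_const: "(\<lambda>w. if w = [] then c else 0) \<in> fa_carrier"
  unfolding fa_carrier_def by (auto intro: finite_subset[of _ "{[]}"])

lemma fa_carrier_zero: "fa_zero \<in> fa_carrier"
  unfolding fa_carrier_def fa_zero_def by simp

lemma fa_carrier_one: "fa_one \<in> fa_carrier"
  unfolding fa_one_def by (rule fa_carrier_const)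

lemma fa_carrier_var: "fa_var i \<in> fa_carrier"
  unfolding fa_carrier_def fa_var_def by (auto intro: finite_subset[of _ "{[i]}"])

typedef (overloaded) ('k::field) ncpoly = "fa_carrier :: 'k fa set"
  using fa_carrier_zero by blast

setup_lifting type_definition_ncpoly

instantiation ncpoly :: (field) ring_1
begin

lift_definition zero_ncpoly :: "'a ncpoly" is fa_zero by (rule fa_carrier_zero)
lift_definition one_ncpoly :: "'a ncpoly" is fa_one by (rule fa_carrier_one)
lift_definition plus_ncpoly :: "'a ncpoly \<Rightarrow> 'a ncpoly \<Rightarrow> 'a ncpoly" is fa_add
  by (rule fa_carrier_add)
lift_definition minus_ncpoly :: "'a ncpoly \<Rightarrow> 'a ncpoly \<Rightarrow> 'a ncpoly" is fa_sub
  by (rule fa_carrier_sub)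
lift_definition uminus_ncpoly :: "'a ncpoly \<Rightarrow> 'a ncpoly" is "\<lambda>f w. - f w"
  by (rule fa_carrier_uminus)
lift_definition times_ncpoly :: "'a ncpoly \<Rightarrow> 'a ncpoly \<Rightarrow> 'a ncpoly" is fa_mult
  by (rule fa_carrier_mult)

instance
proof
  fix a b c :: "'a ncpoly"
  show "a * b * c = a * (b * c)" by transfer (rule fa_mult_assoc)
  show "1 * a = a" by transfer (simp add: fa_one_def fa_mult_const_left fa_smult_def)
  show "a * 1 = a" by transfer (simp add: fa_one_def fa_mult_const_right fa_smult_def)
  show "(a + b) * c = a * c + b * c" by transfer (rule fa_mult_add_left)
  show "a * (b + c) = a * b + a * c" by transfer (rule fa_mult_add_right)
  show "a + b + c = a + (b + c)" by transfer (simp add: fa_add_def add.assoc)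
  show "a + b = b + a" by transfer (simp add: fa_add_def add.commute)
  show "0 + a = a" by transfer (simp add: fa_add_def fa_zero_def)
  show "- a + a = 0" by transfer (simp add: fa_add_def fa_zero_def)
  show "a - b = a + - b" by transfer (simp add: fa_add_def fa_sub_def)
  show "(0::'a ncpoly) \<noteq> 1" by transfer (simp add: fa_zero_def fa_one_def fun_eq_iff)
qed

end

lemma Rep_ncpoly_power: "Rep_ncpoly (x ^ n) = fa_pow (Rep_ncpoly x) n"
  by (induction n) (simp_all add: fa_pow_def one_ncpoly.rep_eq times_ncpoly.rep_eq)

lemma Rep_ncpoly_kappa: "Rep_ncpoly (kappa q x y) = fa_kappa (Suc q) (Rep_ncpoly x) (Rep_ncpoly y)"
  by (simp add: kappa_def fa_kappa_def commutator_def fa_comm_def times_ncpoly.rep_eq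
      minus_ncpoly.rep_eq Rep_ncpoly_power)

lift_definition ncpoly_const :: "'a::field \<Rightarrow> 'a ncpoly" is "\<lambda>c w. if w = [] then c else 0"
  by (rule fa_carrier_const)

lemma Rep_ncpoly_const_mult: "Rep_ncpoly (ncpoly_const c * x) = fa_smult c (Rep_ncpoly x)"
  by (simp add: times_ncpoly.rep_eq ncpoly_const.rep_eq fa_mult_const_left)

lemma ncpoly_const_commute: "ncpoly_const c * x = x * ncpoly_const c"
  by transfer (simp add: fa_mult_const_left fa_mult_const_right)

lemma ncpoly_const_add: "ncpoly_const (a + b) = ncpoly_const a + ncpoly_const b"
  by transfer (auto simp: fa_add_def)

lemma ncpoly_const_diff: "ncpoly_const (a - b) = ncpoly_const a - ncpoly_const b"
  by transfer (auto simp: fa_sub_def)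

lemma ncpoly_const_mult: "ncpoly_const (a * b) = ncpoly_const a * ncpoly_const b"
  by transfer (auto simp: fa_mult_const_left fa_smult_def)

lemma ncpoly_const_0: "ncpoly_const 0 = 0"
  by transfer (auto simp: fa_zero_def)

lemma ncpoly_const_1: "ncpoly_const 1 = 1"
  by transfer (auto simp: fa_one_def)

lemma ncpoly_const_power: "ncpoly_const (a ^ n) = ncpoly_const a ^ n"
  by (induction n) (simp_all add: ncpoly_const_1 ncpoly_const_mult)

lemma ncpoly_const_sum: "ncpoly_const (sum f A) = (\<Sum>x\<in>A. ncpoly_const (f x))"
  by (induction A rule: infinite_finite_induct) (simp_all add: ncpoly_const_0 ncpoly_const_add)

definition fa_eval :: "(nat \<Rightarrow> 'a::field ncpoly) \<Rightarrow> 'a fa \<Rightarrow> 'a ncpoly" where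
  "fa_eval \<sigma> f = (\<Sum>w\<in>fa_support f. ncpoly_const (f w) * prod_list (map \<sigma> w))"

lemma fa_eval_superset:
  assumes "finite S" "fa_support f \<subseteq> S"
  shows "fa_eval \<sigma> f = (\<Sum>w\<in>S. ncpoly_const (f w) * prod_list (map \<sigma> w))"
  unfolding fa_eval_def
  by (rule sum.mono_neutral_left) (use assms in \<open>auto simp: ncpoly_const_0\<close>)

lemma fa_eval_add:
  assumes "f \<in> fa_carrier" "g \<in> fa_carrier"
  shows "fa_eval \<sigma> (fa_add f g) = fa_eval \<sigma> f + fa_eval \<sigma> g"
proof -
  let ?S = "fa_support f \<union> fa_support g"
  have "finite ?S" using assms by (simp add: fa_carrier_def)
  moreover have "fa_support (fa_add f g) \<subseteq> ?S" by (auto simp: fa_add_def)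
  ultimately show ?thesis
    by (simp add: fa_eval_superset[of ?S] fa_add_def ncpoly_const_add distrib_right sum.distrib)
qed

lemma fa_eval_sub:
  assumes "f \<in> fa_carrier" "g \<in> fa_carrier"
  shows "fa_eval \<sigma> (fa_sub f g) = fa_eval \<sigma> f - fa_eval \<sigma> g"
proof -
  let ?S = "fa_support f \<union> fa_support g"
  have "finite ?S" using assms by (simp add: fa_carrier_def)
  moreover have "fa_support (fa_sub f g) \<subseteq> ?S" by (auto simp: fa_sub_def)
  ultimately show ?thesis
    by (simp add: fa_eval_superset[of ?S] fa_sub_def ncpoly_const_diff left_diff_distrib
        sum_subtractf)
qed

lemma fa_eval_smult:
  assumes "f \<in> fa_carrier"
  shows "fa_eval \<sigma> (fa_smult c f) = ncpoly_const c * fa_eval \<sigma> f"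
proof -
  have "finite (fa_support f)" using assms by (simp add: fa_carrier_def)
  moreover have "fa_support (fa_smult c f) \<subseteq> fa_support f" by (auto simp: fa_smult_def)
  ultimately show ?thesis
    by (simp add: fa_eval_superset[of "fa_support f"] fa_smult_def ncpoly_const_mult
        sum_distrib_left mult.assoc)
qed

lemma fa_eval_one: "fa_eval \<sigma> fa_one = 1"
  by (subst fa_eval_superset[of "{[]}"]) (auto simp: fa_one_def ncpoly_const_1)

lemma fa_eval_var: "fa_eval \<sigma> (fa_var i) = \<sigma> i"
  by (subst fa_eval_superset[of "{[i]}"]) (auto simp: fa_var_def ncpoly_const_1)

lemma fa_eval_mult:
  assumes f: "f \<in> fa_carrier" and g: "g \<in> fa_carrier"
  shows "fa_eval \<sigma> (fa_mult f g) = fa_eval \<sigma> f * fa_eval \<sigma> g"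
proof -
  let ?Sf = "fa_support f" and ?Sg = "fa_support g"
  let ?c = "\<lambda>p::nat list \<times> nat list. fst p @ snd p"
  let ?S = "?c ` (?Sf \<times> ?Sg)"
  let ?G = "\<lambda>p. ncpoly_const (f (fst p)) * prod_list (map \<sigma> (fst p))
      * (ncpoly_const (g (snd p)) * prod_list (map \<sigma> (snd p)))"
  have fin: "finite ?Sf" "finite ?Sg" using f g by (auto simp: fa_carrier_def)
  have summand: "ncpoly_const (f (fst p) * g (snd p)) * prod_list (map \<sigma> (?c p)) = ?G p" for p
    by (simp add: ncpoly_const_mult mult.assoc) (metis mult.assoc ncpoly_const_commute)
  have "fa_eval \<sigma> (fa_mult f g) = (\<Sum>w\<in>?S. \<Sum>p\<in>splits w. ?G p)"
    using fin fa_support_mult[of f g]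
    by (simp add: fa_eval_superset[of ?S] fa_mult_splits ncpoly_const_sum sum_distrib_right
        flip: summand)
  also have "\<dots> = (\<Sum>w\<in>?S. \<Sum>p\<in>{p \<in> ?Sf \<times> ?Sg. ?c p = w}. ?G p)"
  proof (rule sum.cong[OF refl], rule sum.mono_neutral_right)
    fix w
    show "finite (splits w)" by (rule finite_splits)
    show "{p \<in> ?Sf \<times> ?Sg. ?c p = w} \<subseteq> splits w" by auto
    show "\<forall>p\<in>splits w - {p \<in> ?Sf \<times> ?Sg. ?c p = w}. ?G p = 0"
      by (auto simp: ncpoly_const_0 mem_Times_iff)
  qed
  also have "\<dots> = (\<Sum>p\<in>?Sf \<times> ?Sg. ?G p)"
    by (rule sum.group) (use fin in auto)
  also have "\<dots> = fa_eval \<sigma> f * fa_eval \<sigma> g"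
    unfolding fa_eval_def sum_product sum.cartesian_product by (simp add: mult.assoc case_prod_beta)
  finally show ?thesis .
qed

lemma fa_endo_eval: "fa_endo (\<lambda>f. Rep_ncpoly (fa_eval \<sigma> f))"
  unfolding fa_endo_def
  by (auto simp: Rep_ncpoly[simplified] fa_eval_add fa_eval_mult fa_eval_smult fa_eval_one
      plus_ncpoly.rep_eq times_ncpoly.rep_eq ncpoly_const.rep_eq fa_mult_const_left one_ncpoly.rep_eq)

section \<open>Transfer to \<open>T\<^sup>(\<^sup>3\<^sup>)\<close>\<close>

lemma fa_T_ideal_commutator3_mem:
  assumes "fa_T_ideal I" and "fa_comm3 (fa_var 1) (fa_var 2) (fa_var 3) \<in> I"
  shows "Rep_ncpoly (commutator (commutator a b) c) \<in> I"
proof -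
  define \<sigma> where "\<sigma> = (\<lambda>i::nat. if i = 1 then a else if i = 2 then b else c)"
  have "Rep_ncpoly (fa_eval \<sigma> (fa_comm3 (fa_var 1) (fa_var 2) (fa_var 3))) \<in> I"
    using assms fa_endo_eval unfolding fa_T_ideal_def by blast
  moreover have "fa_eval \<sigma> (fa_comm3 (fa_var 1) (fa_var 2) (fa_var 3)) = commutator (commutator a b) c"
    by (simp add: fa_comm3_def fa_comm_def fa_eval_sub fa_eval_mult fa_eval_var fa_carrier_mult
        fa_carrier_sub fa_carrier_var commutator_def \<sigma>_def)
  ultimately show ?thesis
    by simp
qed

lemma commutator3_ideal_preimage:
  assumes T: "fa_T_ideal I" and gen: "fa_comm3 (fa_var 1) (fa_var 2) (fa_var 3) \<in> I"
    and two: "(2::'k::field) \<noteq> 0"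
  shows "commutator3_ideal {x::'k ncpoly. Rep_ncpoly x \<in> I}"
proof
  have "fa_ideal I"
    using T by (simp add: fa_T_ideal_def)
  then have zero: "fa_zero \<in> I"
    and add: "\<And>a b. a \<in> I \<Longrightarrow> b \<in> I \<Longrightarrow> fa_add a b \<in> I"
    and smult: "\<And>a c. a \<in> I \<Longrightarrow> fa_smult c a \<in> I"
    and mult: "\<And>a r. a \<in> I \<Longrightarrow> r \<in> fa_carrier \<Longrightarrow> fa_mult r a \<in> I \<and> fa_mult a r \<in> I"
    unfolding fa_ideal_def by blast+
  fix x y r a b c :: "'k ncpoly"
  show "0 \<in> {x. Rep_ncpoly x \<in> I}"
    using zero by (simp add: zero_ncpoly.rep_eq)
  show "x + y \<in> {x. Rep_ncpoly x \<in> I}" if "x \<in> {x. Rep_ncpoly x \<in> I}" "y \<in> {x. Rep_ncpoly x \<in> I}"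
    using that add by (simp add: plus_ncpoly.rep_eq)
  show "r * x \<in> {x. Rep_ncpoly x \<in> I}" "x * r \<in> {x. Rep_ncpoly x \<in> I}"
    if "x \<in> {x. Rep_ncpoly x \<in> I}"
    using that mult Rep_ncpoly[of r] by (simp_all add: times_ncpoly.rep_eq)
  show "commutator (commutator a b) c \<in> {x. Rep_ncpoly x \<in> I}"
    using fa_T_ideal_commutator3_mem[OF T gen] by simp
  assume "x + x \<in> {x. Rep_ncpoly x \<in> I}"
  then have "fa_smult (1 / 2) (Rep_ncpoly (x + x)) \<in> I"
    by (intro smult) simp
  moreover have "fa_smult (1 / 2) (Rep_ncpoly (x + x)) = Rep_ncpoly x"
    using two by (simp add: plus_ncpoly.rep_eq fa_smult_def fa_add_def fun_eq_iff field_simps)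
  ultimately show "x \<in> {x. Rep_ncpoly x \<in> I}"
    by simp
qed

lemma Rep_ncpoly_mem_T3:
  assumes "(2::'k::field) \<noteq> 0" and "\<And>J. commutator3_ideal J \<Longrightarrow> x \<in> J"
  shows "Rep_ncpoly (x :: 'k ncpoly) \<in> T3"
  unfolding T3_def using commutator3_ideal_preimage[OF _ _ assms(1)] assms(2) by blast

lemma fa_carrier_eq_Rep_ncpoly: "f \<in> fa_carrier \<Longrightarrow> \<exists>x. f = Rep_ncpoly x"
  using Abs_ncpoly_inverse by metis

lemma fa_kappa_mult_right_mem_T3:
  assumes "(2::'k::field) \<noteq> 0" and "u \<in> fa_carrier" "v \<in> fa_carrier" "w \<in> fa_carrier"
  shows "fa_sub (fa_kappa (Suc q) u (fa_mult v w))
           (fa_add (fa_mult (fa_pow v (Suc q)) (fa_kappa (Suc q) u w))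
                   (fa_mult (fa_pow w (Suc q)) (fa_kappa (Suc q) u (v :: 'k fa)))) \<in> T3"
proof -
  obtain U V W where "u = Rep_ncpoly U" "v = Rep_ncpoly V" "w = Rep_ncpoly W"
    using assms(2-4) fa_carrier_eq_Rep_ncpoly by metis
  then have "fa_sub (fa_kappa (Suc q) u (fa_mult v w))
           (fa_add (fa_mult (fa_pow v (Suc q)) (fa_kappa (Suc q) u w))
                   (fa_mult (fa_pow w (Suc q)) (fa_kappa (Suc q) u v)))
      = Rep_ncpoly (kappa q U (V * W) - (V ^ Suc q * kappa q U W + W ^ Suc q * kappa q U V))"
    by (simp only: Rep_ncpoly_kappa Rep_ncpoly_power minus_ncpoly.rep_eq plus_ncpoly.rep_eq
        times_ncpoly.rep_eq)
  also have "\<dots> \<in> T3"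
    using commutator3_ideal.kappa_mult_right_cong[of _ q U V W]
    by (intro Rep_ncpoly_mem_T3[OF assms(1)]) (simp add: commutator3_ideal.cong_mod_def)
  finally show ?thesis .
qed

lemma fa_kappa_smult_right:
  assumes "u \<in> fa_carrier" "v \<in> fa_carrier"
  shows "fa_kappa (Suc q) u (fa_smult \<alpha> v) = fa_smult (\<alpha> ^ Suc q) (fa_kappa (Suc q) u v)"
proof -
  obtain U V where uv: "u = Rep_ncpoly U" "v = Rep_ncpoly V"
    using assms fa_carrier_eq_Rep_ncpoly by metis
  have "fa_kappa (Suc q) u (fa_smult \<alpha> v) = Rep_ncpoly (kappa q U (ncpoly_const \<alpha> * V))"
    by (simp only: uv Rep_ncpoly_kappa Rep_ncpoly_const_mult)
  also have "\<dots> = Rep_ncpoly (ncpoly_const (\<alpha> ^ Suc q) * kappa q U V)"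
    by (simp only: kappa_mult_central_right[OF ncpoly_const_commute] ncpoly_const_power)
  also have "\<dots> = fa_smult (\<alpha> ^ Suc q) (fa_kappa (Suc q) u v)"
    by (simp only: uv Rep_ncpoly_kappa Rep_ncpoly_const_mult)
  finally show ?thesis .
qed

theorem lemma2p5:
  fixes p :: nat
  assumes "prime p" and "p > 2" and "CHAR('k::field) = p"
  shows "(\<forall>u\<in>(fa_carrier :: 'k fa set). \<forall>v\<in>fa_carrier. \<forall>w\<in>fa_carrier.
            fa_sub (fa_kappa p u (fa_mult v w))
                   (fa_add (fa_mult (fa_pow v p) (fa_kappa p u w))
                           (fa_mult (fa_pow w p) (fa_kappa p u v))) \<in> T3)
       \<and> (\<forall>u\<in>(fa_carrier0 :: 'k fa set). \<forall>v\<in>fa_carrier0. \<forall>\<alpha>::'k.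
            fa_kappa p u (fa_smult \<alpha> v) = fa_smult (\<alpha> ^ p) (fa_kappa p u v))"
proof -
  have two: "(2::'k) \<noteq> 0"
    using assms(2,3) of_nat_eq_0_iff_char_dvd[of 2, where 'a='k] by (auto dest: dvd_imp_le)
  obtain q where "p = Suc q"
    using assms(2) by (cases p) auto
  then show ?thesis
    using fa_kappa_mult_right_mem_T3[OF two] fa_kappa_smult_right
    by (auto simp: fa_carrier0_def)
qed

end
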